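(* Let $T>0$, $\alpha\in(0,1)$, $f\in USC([0,T])$ (resp. $f\in LSC([0,T])$) and $g\in C^1((0,T])$. Then: (i) for each $t\in(0,T]$, $J_r[g](t)$ exists for all $r\in(0,t)$; (ii) for each $t\in(0,T]$, $K_r[f](t)$ makes sense and is bounded from below (resp. from above) for all $r\in(0,t)$; (iii) if $f-g$ attains its maximum (resp. minimum) over $(0,T]$ at $\hat t\in(0,T]$, then $K_0[f](\hat t)$ makes sense and is bounded from below (resp. from above). Moreover, (iv) let $t_j\in(0,T]$, $r_j\in(0,t_j)$, $\alpha_j\in(0,1)$ ($j\ge0$) be sequences with $(t_j,r_j,\alpha_j)\to(\hat t,\hat r,\alpha)\in(0,T]\times[0,\hat t)\times(0,1)$, and let $J^{\alpha_j}_r$ denote $J_r$ with $\alpha$ replaced by $\alpha_j$. Then $\lim_{j\to\infty}J^{\alpha_j}_{r_j}[g](t_j)=J^{\alpha}_{\hat r}[g](\hat t)$.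
   Context: For measurable $f:[0,T]\to\mathbb{R}$, $t\in(0,T]$ and $r\in[0,t]$: $J_r[f](t)=\frac{\alpha}{\Gamma(1-\alpha)}\int_0^r (f(t)-f(t-\tau))\frac{d\tau}{\tau^{\alpha+1}}$, $K_r[f](t)=\frac{f(t)-f(0)}{t^\alpha\Gamma(1-\alpha)}+\frac{\alpha}{\Gamma(1-\alpha)}\int_r^t (f(t)-f(t-\tau))\frac{d\tau}{\tau^{\alpha+1}}$. Integrals whose lower limit is $0$ are improper: $\int_0^b=\lim_{\rho\searrow0}\int_\rho^b$. For an integrand $h(\tau)$, the integral $\int h\,\tau^{-\alpha-1}d\tau$ "makes sense" if at least one of the integrals of $h^+=\max\{h,0\}$, $h^-=\max\{-h,0\}$ is finite, and "exists" if both are finite (for improper integrals: the truncated integrals of $h^\pm$ are finite for each lower limit $\rho>0$ and their limits as $\rho\searrow0$ are finite). The same terminology is used for $K_r$, which contains an additional non-integral term. $J_0\equiv0$. *)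

theory Defs
  imports "HOL-Analysis.Analysis"
begin

definition usc_on :: "real set \<Rightarrow> (real \<Rightarrow> real) \<Rightarrow> bool" where
  "usc_on S f \<longleftrightarrow> (\<forall>x\<in>S. \<forall>a. f x < a \<longrightarrow> (\<forall>\<^sub>F y in at x within S. f y < a))"

definition lsc_on :: "real set \<Rightarrow> (real \<Rightarrow> real) \<Rightarrow> bool" where
  "lsc_on S f \<longleftrightarrow> (\<forall>x\<in>S. \<forall>a. a < f x \<longrightarrow> (\<forall>\<^sub>F y in at x within S. a < f y))"

definition C1_on :: "real set \<Rightarrow> (real \<Rightarrow> real) \<Rightarrow> bool" where
  "C1_on S g \<longleftrightarrow> (\<exists>g'. continuous_on S g' \<and>
      (\<forall>t\<in>S. (g has_real_derivative g' t) (at t within S)))"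

definition wint :: "real \<Rightarrow> (real \<Rightarrow> real) \<Rightarrow> real \<Rightarrow> real \<Rightarrow> ennreal" where
  "wint \<alpha> h a b = (\<integral>\<^sup>+ \<tau>\<in>{a..b}. ennreal (max (h \<tau>) 0 * \<tau> powr (-\<alpha>-1)) \<partial>lborel)"

definition prop_makes_sense :: "real \<Rightarrow> (real \<Rightarrow> real) \<Rightarrow> real \<Rightarrow> real \<Rightarrow> bool" where
  "prop_makes_sense \<alpha> h a b \<longleftrightarrow> set_borel_measurable lborel {a..b} h \<and>
     (wint \<alpha> h a b < \<infinity> \<or> wint \<alpha> (\<lambda>\<tau>. - h \<tau>) a b < \<infinity>)"

definition prop_val :: "real \<Rightarrow> (real \<Rightarrow> real) \<Rightarrow> real \<Rightarrow> real \<Rightarrow> ereal" where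
  "prop_val \<alpha> h a b = enn2ereal (wint \<alpha> h a b) - enn2ereal (wint \<alpha> (\<lambda>\<tau>. - h \<tau>) a b)"

definition imp_part_finite :: "real \<Rightarrow> (real \<Rightarrow> real) \<Rightarrow> real \<Rightarrow> bool" where
  "imp_part_finite \<alpha> h b \<longleftrightarrow> (\<forall>\<rho>\<in>{0<..b}. wint \<alpha> h \<rho> b < \<infinity>) \<and>
     (\<exists>L::real. ((\<lambda>\<rho>. wint \<alpha> h \<rho> b) \<longlongrightarrow> ennreal L) (at_right 0))"

definition imp_exists :: "real \<Rightarrow> (real \<Rightarrow> real) \<Rightarrow> real \<Rightarrow> bool" where
  "imp_exists \<alpha> h b \<longleftrightarrow> set_borel_measurable lborel {0<..b} h \<and>
     imp_part_finite \<alpha> h b \<and> imp_part_finite \<alpha> (\<lambda>\<tau>. - h \<tau>) b"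

definition imp_makes_sense :: "real \<Rightarrow> (real \<Rightarrow> real) \<Rightarrow> real \<Rightarrow> bool" where
  "imp_makes_sense \<alpha> h b \<longleftrightarrow> set_borel_measurable lborel {0<..b} h \<and>
     (imp_part_finite \<alpha> h b \<or> imp_part_finite \<alpha> (\<lambda>\<tau>. - h \<tau>) b)"

definition imp_val :: "real \<Rightarrow> (real \<Rightarrow> real) \<Rightarrow> real \<Rightarrow> ereal" where
  "imp_val \<alpha> h b = enn2ereal (Lim (at_right 0) (\<lambda>\<rho>. wint \<alpha> h \<rho> b))
                    - enn2ereal (Lim (at_right 0) (\<lambda>\<rho>. wint \<alpha> (\<lambda>\<tau>. - h \<tau>) \<rho> b))"

definition J_exists :: "real \<Rightarrow> real \<Rightarrow> (real \<Rightarrow> real) \<Rightarrow> real \<Rightarrow> bool" where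
  "J_exists \<alpha> r f t \<longleftrightarrow> imp_exists \<alpha> (\<lambda>\<tau>. f t - f (t - \<tau>)) r"

text \<open>Value of J_r[f](t) (meaningful when it exists); J_0 = 0.\<close>
definition J_val :: "real \<Rightarrow> real \<Rightarrow> (real \<Rightarrow> real) \<Rightarrow> real \<Rightarrow> real" where
  "J_val \<alpha> r f t = (if r = 0 then 0 else
     \<alpha> / Gamma (1 - \<alpha>) * real_of_ereal (imp_val \<alpha> (\<lambda>\<tau>. f t - f (t - \<tau>)) r))"

definition K_makes_sense :: "real \<Rightarrow> real \<Rightarrow> (real \<Rightarrow> real) \<Rightarrow> real \<Rightarrow> bool" where
  "K_makes_sense \<alpha> r f t \<longleftrightarrow> (if r = 0
      then imp_makes_sense \<alpha> (\<lambda>\<tau>. f t - f (t - \<tau>)) t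
      else prop_makes_sense \<alpha> (\<lambda>\<tau>. f t - f (t - \<tau>)) r t)"

definition K_val :: "real \<Rightarrow> real \<Rightarrow> (real \<Rightarrow> real) \<Rightarrow> real \<Rightarrow> ereal" where
  "K_val \<alpha> r f t = ereal ((f t - f 0) / (t powr \<alpha> * Gamma (1 - \<alpha>))) +
     ereal (\<alpha> / Gamma (1 - \<alpha>)) *
       (if r = 0 then imp_val \<alpha> (\<lambda>\<tau>. f t - f (t - \<tau>)) t
        else prop_val \<alpha> (\<lambda>\<tau>. f t - f (t - \<tau>)) r t)"

end

theory Submission
  imports Defs
begin

text \<open>
  On every interval \<open>[\<delta>, T]\<close> with \<open>\<delta> > 0\<close> a \<open>C\<^sup>1\<close> function is Lipschitz, so an increment
  \<open>g t - g (t - \<tau>)\<close> is \<open>O(\<tau>)\<close> and is integrable against \<open>\<tau> powr (-\<alpha>-1)\<close> near \<open>0\<close>, because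
  \<open>\<tau> * \<tau> powr (-\<alpha>-1) = \<tau> powr (-\<alpha>)\<close> with \<open>\<alpha> < 1\<close>; this gives (i). An upper semicontinuous
  \<open>f\<close> is bounded above on \<open>[0, T]\<close>, so away from \<open>\<tau> = 0\<close> the negative part of
  \<open>f t - f (t - \<tau>)\<close> has a finite integral, which gives (ii). At a maximum point of \<open>f - g\<close>
  we have \<open>f t - f (t - \<tau>) \<ge> g t - g (t - \<tau>) \<ge> - M \<tau>\<close> for small \<open>\<tau>\<close>, which controls the
  negative part near \<open>0\<close> as well and gives (iii). The lower semicontinuous cases follow by
  passing to \<open>-f\<close> and \<open>-g\<close>. Finally (iv) is dominated convergence: for \<open>\<alpha>\<^sub>j\<close> below some
  \<open>\<beta> < 1\<close> and \<open>t\<^sub>j - r\<^sub>j\<close> bounded away from \<open>0\<close>, the integrands are dominated by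
  \<open>M (\<tau> powr (-\<beta>) + 1)\<close>.
\<close>

section \<open>Integrals against the kernel\<close>

lemma set_integrable_powr_Ioc:
  assumes "a > -1" "0 \<le> b"
  shows "set_integrable lborel {0<..b} (\<lambda>\<tau>::real. \<tau> powr a)"
proof -
  have "(\<lambda>\<tau>::real. \<tau> powr a) absolutely_integrable_on {0<..b}"
    by (intro nonnegative_absolutely_integrable_1 integrable_on_powr_from_0') (use assms in auto)
  then have "integrable lebesgue (\<lambda>\<tau>. indicator {0<..b} \<tau> *\<^sub>R \<tau> powr a)"
    by (simp add: set_integrable_def)
  moreover have "(\<lambda>\<tau>::real. indicator {0<..b} \<tau> *\<^sub>R \<tau> powr a) \<in> borel_measurable lborel"
    unfolding measurable_lborel2
    by (intro borel_measurable_continuous_on_indicator continuous_intros) auto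
  ultimately show ?thesis
    unfolding set_integrable_def by (simp add: integrable_completion)
qed

lemma mult_powr_kernel: "0 < \<tau> \<Longrightarrow> \<tau> * \<tau> powr (-\<alpha>-1) = \<tau> powr (-\<alpha>::real)"
  using powr_add[of \<tau> 1 "-\<alpha>-1"] by simp

lemma set_borel_measurable_uminus_iff:
  "set_borel_measurable M S (\<lambda>x. - h x) \<longleftrightarrow> set_borel_measurable M S (h::'a \<Rightarrow> real)"
proof -
  have "(\<lambda>x. indicat_real S x *\<^sub>R - h x) = (\<lambda>x. - (indicat_real S x *\<^sub>R h x))" for h :: "'a \<Rightarrow> real"
    by (simp add: fun_eq_iff)
  then show ?thesis
    unfolding set_borel_measurable_def by (metis borel_measurable_uminus_eq)
qed

lemma set_integrable_pos_part_kernel: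
  fixes h :: "real \<Rightarrow> real"
  assumes "\<alpha> < 1" "0 < b"
    and meas: "set_borel_measurable lborel {0<..b} h"
    and bound: "\<And>\<tau>. \<tau> \<in> {0<..b} \<Longrightarrow> h \<tau> \<le> C * \<tau>"
  shows "set_integrable lborel {0<..b} (\<lambda>\<tau>. max (h \<tau>) 0 * \<tau> powr (-\<alpha>-1))"
proof (rule set_integrable_bound)
  show "set_integrable lborel {0<..b} (\<lambda>\<tau>. \<bar>C\<bar> * \<tau> powr (-\<alpha>))"
    using set_integrable_powr_Ioc[of "-\<alpha>" b] assms by simp
  have "(\<lambda>\<tau>. indicator {0<..b} \<tau> *\<^sub>R (max (h \<tau>) 0 * \<tau> powr (-\<alpha>-1))) =
        (\<lambda>\<tau>. max (indicator {0<..b} \<tau> *\<^sub>R h \<tau>) 0 * \<tau> powr (-\<alpha>-1))"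
    by (auto simp: fun_eq_iff indicator_def)
  moreover have "(\<lambda>\<tau>. max (indicator {0<..b} \<tau> *\<^sub>R h \<tau>) 0 * \<tau> powr (-\<alpha>-1)) \<in> borel_measurable lborel"
    using meas unfolding set_borel_measurable_def by measurable
  ultimately show "set_borel_measurable lborel {0<..b} (\<lambda>\<tau>. max (h \<tau>) 0 * \<tau> powr (-\<alpha>-1))"
    unfolding set_borel_measurable_def by simp
  show "AE \<tau> in lborel. \<tau> \<in> {0<..b} \<longrightarrow>
          norm (max (h \<tau>) 0 * \<tau> powr (-\<alpha>-1)) \<le> norm (\<bar>C\<bar> * \<tau> powr (-\<alpha>))"
  proof (intro AE_I2 impI)
    fix \<tau> :: real assume \<tau>: "\<tau> \<in> {0<..b}"
    have "C * \<tau> \<le> \<bar>C\<bar> * \<tau>" "0 \<le> \<bar>C\<bar> * \<tau>"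
      using \<tau> by (auto intro: mult_right_mono)
    then have "max (h \<tau>) 0 \<le> \<bar>C\<bar> * \<tau>" using bound[OF \<tau>] by linarith
    then have "max (h \<tau>) 0 * \<tau> powr (-\<alpha>-1) \<le> \<bar>C\<bar> * \<tau> * \<tau> powr (-\<alpha>-1)"
      by (intro mult_right_mono) auto
    also have "\<dots> = \<bar>C\<bar> * \<tau> powr (-\<alpha>)" using mult_powr_kernel[of \<tau> \<alpha>] \<tau> by simp
    finally show "norm (max (h \<tau>) 0 * \<tau> powr (-\<alpha>-1)) \<le> norm (\<bar>C\<bar> * \<tau> powr (-\<alpha>))"
      by simp
  qed
qed

lemma wint_eq_set_integral:
  fixes h :: "real \<Rightarrow> real"
  assumes int: "set_integrable lborel {0<..b} (\<lambda>\<tau>. max (h \<tau>) 0 * \<tau> powr (-\<alpha>-1))"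
    and \<rho>: "\<rho> \<in> {0<..b}"
  shows "wint \<alpha> h \<rho> b = ennreal (integral {\<rho>..b} (\<lambda>\<tau>. max (h \<tau>) 0 * \<tau> powr (-\<alpha>-1)))"
proof -
  define P where "P = (\<lambda>\<tau>. max (h \<tau>) 0 * \<tau> powr (-\<alpha>-1))"
  have int_\<rho>: "set_integrable lborel {\<rho>..b} P"
    by (rule set_integrable_subset[OF int[folded P_def]]) (use \<rho> in auto)
  have "wint \<alpha> h \<rho> b = (\<integral>\<^sup>+ \<tau>. ennreal (indicator {\<rho>..b} \<tau> *\<^sub>R P \<tau>) \<partial>lborel)"
    unfolding wint_def P_def by (intro nn_integral_cong) (auto simp: indicator_def)
  also have "\<dots> = ennreal (LINT \<tau>:{\<rho>..b}|lborel. P \<tau>)"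
    unfolding set_lebesgue_integral_def
    by (rule nn_integral_eq_integral) (use int_\<rho> in \<open>auto simp: set_integrable_def P_def\<close>)
  also have "\<dots> = ennreal (integral {\<rho>..b} P)"
    using set_borel_integral_eq_integral(2)[OF int_\<rho>] by simp
  finally show ?thesis by (simp add: P_def)
qed

lemma wint_tendsto_set_integral:
  fixes h :: "real \<Rightarrow> real"
  assumes int: "set_integrable lborel {0<..b} (\<lambda>\<tau>. max (h \<tau>) 0 * \<tau> powr (-\<alpha>-1))"
    and "0 < b"
  shows "((\<lambda>\<rho>. wint \<alpha> h \<rho> b) \<longlongrightarrow>
           ennreal (LINT \<tau>:{0<..b}|lborel. max (h \<tau>) 0 * \<tau> powr (-\<alpha>-1))) (at_right 0)"
proof -
  define P where "P = (\<lambda>\<tau>. max (h \<tau>) 0 * \<tau> powr (-\<alpha>-1))"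
  have "P integrable_on {0<..b}"
    using set_borel_integral_eq_integral(1)[OF int] by (simp add: P_def)
  then have P_int: "P integrable_on {0..b}"
    by (rule integrable_spike_set) (use \<open>0 < b\<close> in \<open>auto intro: negligible_subset[of "{0}"]\<close>)
  have "integral {0..b} P = integral {0<..b} P"
    by (rule integral_spike_set) (use \<open>0 < b\<close> in \<open>auto intro: negligible_subset[of "{0}"]\<close>)
  also have "\<dots> = (LINT \<tau>:{0<..b}|lborel. P \<tau>)"
    using set_borel_integral_eq_integral(2)[OF int] by (simp add: P_def)
  finally have P_eq: "integral {0..b} P = (LINT \<tau>:{0<..b}|lborel. P \<tau>)" .
  have "((\<lambda>\<rho>. integral {\<rho>..b} P) \<longlongrightarrow> integral {0..b} P) (at 0 within {0..b})"
    using indefinite_integral_continuous_1'[OF P_int] \<open>0 < b\<close> unfolding continuous_on_def by auto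
  then have "((\<lambda>\<rho>. ennreal (integral {\<rho>..b} P)) \<longlongrightarrow> ennreal (LINT \<tau>:{0<..b}|lborel. P \<tau>)) (at_right 0)"
    using \<open>0 < b\<close> P_eq by (intro tendsto_ennrealI) (simp add: at_within_Icc_at_right)
  moreover have "eventually (\<lambda>\<rho>. \<rho> \<in> {0<..b}) (at_right (0::real))"
    using \<open>0 < b\<close> by (auto simp: eventually_at_right_field intro: exI[of _ b])
  then have "eventually (\<lambda>\<rho>. ennreal (integral {\<rho>..b} P) = wint \<alpha> h \<rho> b) (at_right 0)"
    by (rule eventually_mono) (simp add: wint_eq_set_integral[OF int] P_def)
  ultimately show ?thesis
    unfolding P_def by (rule Lim_transform_eventually)
qed

lemma
  fixes h :: "real \<Rightarrow> real"
  assumes "\<alpha> < 1" "0 < b" "set_borel_measurable lborel {0<..b} h"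
    and "\<And>\<tau>. \<tau> \<in> {0<..b} \<Longrightarrow> h \<tau> \<le> C * \<tau>"
  shows imp_part_finite_linear_bound: "imp_part_finite \<alpha> h b"
    and Lim_wint_linear_bound: "enn2ereal (Lim (at_right 0) (\<lambda>\<rho>. wint \<alpha> h \<rho> b)) =
           ereal (LINT \<tau>:{0<..b}|lborel. max (h \<tau>) 0 * \<tau> powr (-\<alpha>-1))"
proof -
  note int = set_integrable_pos_part_kernel[OF assms]
  note lim = wint_tendsto_set_integral[OF int \<open>0 < b\<close>]
  have "\<forall>\<rho>\<in>{0<..b}. wint \<alpha> h \<rho> b < \<infinity>"
    using wint_eq_set_integral[OF int] by simp
  then show "imp_part_finite \<alpha> h b"
    unfolding imp_part_finite_def using lim by blast
  have "0 \<le> (LINT \<tau>:{0<..b}|lborel. max (h \<tau>) 0 * \<tau> powr (-\<alpha>-1))"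
    unfolding set_lebesgue_integral_def
    by (rule Bochner_Integration.integral_nonneg) (auto simp: indicator_def)
  then show "enn2ereal (Lim (at_right 0) (\<lambda>\<rho>. wint \<alpha> h \<rho> b)) =
           ereal (LINT \<tau>:{0<..b}|lborel. max (h \<tau>) 0 * \<tau> powr (-\<alpha>-1))"
    using tendsto_Lim[OF _ lim] by simp
qed

lemma Lim_wint_less_top:
  assumes "imp_part_finite \<alpha> h b"
  shows "Lim (at_right 0) (\<lambda>\<rho>. wint \<alpha> h \<rho> b) < \<infinity>"
proof -
  obtain L :: real where "((\<lambda>\<rho>. wint \<alpha> h \<rho> b) \<longlongrightarrow> ennreal L) (at_right 0)"
    using assms unfolding imp_part_finite_def by blast
  then have "Lim (at_right 0) (\<lambda>\<rho>. wint \<alpha> h \<rho> b) = ennreal L"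
    by (rule tendsto_Lim[rotated]) simp
  then show ?thesis by simp
qed

lemma
  fixes h :: "real \<Rightarrow> real"
  assumes "\<alpha> < 1" "0 < b"
    and meas: "set_borel_measurable lborel {0<..b} h"
    and bound: "\<And>\<tau>. \<tau> \<in> {0<..b} \<Longrightarrow> \<bar>h \<tau>\<bar> \<le> C * \<tau>"
  shows imp_exists_abs_linear_bound: "imp_exists \<alpha> h b"
    and set_integrable_abs_linear_bound:
      "set_integrable lborel {0<..b} (\<lambda>\<tau>. h \<tau> * \<tau> powr (-\<alpha>-1))"
    and imp_val_abs_linear_bound:
      "imp_val \<alpha> h b = ereal (LINT \<tau>:{0<..b}|lborel. h \<tau> * \<tau> powr (-\<alpha>-1))"
proof -
  have bound_pos: "h \<tau> \<le> C * \<tau>" and bound_neg: "- h \<tau> \<le> C * \<tau>" if "\<tau> \<in> {0<..b}" for \<tau>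
    using bound[OF that] by linarith+
  note meas_neg = set_borel_measurable_uminus_iff[THEN iffD2, OF meas]
  show "imp_exists \<alpha> h b"
    unfolding imp_exists_def
    using meas imp_part_finite_linear_bound[OF assms(1,2) meas bound_pos]
      imp_part_finite_linear_bound[OF assms(1,2) meas_neg bound_neg] by blast
  have pos_minus_neg: "max (h \<tau>) 0 * \<tau> powr (-\<alpha>-1) - max (- h \<tau>) 0 * \<tau> powr (-\<alpha>-1)
       = h \<tau> * \<tau> powr (-\<alpha>-1)" for \<tau>
    by (auto simp: max_def algebra_simps)
  note diff = set_integral_diff[OF set_integrable_pos_part_kernel[OF assms(1,2) meas bound_pos]
      set_integrable_pos_part_kernel[OF assms(1,2) meas_neg bound_neg]]
  show "set_integrable lborel {0<..b} (\<lambda>\<tau>. h \<tau> * \<tau> powr (-\<alpha>-1))"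
    using diff(1) by (simp only: pos_minus_neg)
  have "imp_val \<alpha> h b = ereal (LINT \<tau>:{0<..b}|lborel. max (h \<tau>) 0 * \<tau> powr (-\<alpha>-1))
      - ereal (LINT \<tau>:{0<..b}|lborel. max (- h \<tau>) 0 * \<tau> powr (-\<alpha>-1))"
    unfolding imp_val_def by (simp only: Lim_wint_linear_bound[OF assms(1,2) meas bound_pos]
      Lim_wint_linear_bound[OF assms(1,2) meas_neg bound_neg])
  then show "imp_val \<alpha> h b = ereal (LINT \<tau>:{0<..b}|lborel. h \<tau> * \<tau> powr (-\<alpha>-1))"
    using diff(2) by (simp add: pos_minus_neg)
qed

lemma wint_less_top_bounded:
  assumes "0 < r" "r \<le> t" "0 \<le> \<alpha>" "\<And>\<tau>. \<tau> \<in> {r..t} \<Longrightarrow> h \<tau> \<le> B"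
  shows "wint \<alpha> h r t < \<infinity>"
proof -
  define c where "c = max B 0 * r powr (-\<alpha>-1)"
  have "wint \<alpha> h r t \<le> (\<integral>\<^sup>+ \<tau>. ennreal c * indicator {r..t} \<tau> \<partial>lborel)"
    unfolding wint_def
  proof (intro nn_integral_mono)
    fix \<tau> :: real
    show "ennreal (max (h \<tau>) 0 * \<tau> powr (- \<alpha> - 1)) * indicator {r..t} \<tau> \<le> ennreal c * indicator {r..t} \<tau>"
    proof (cases "\<tau> \<in> {r..t}")
      case True
      have "max (h \<tau>) 0 \<le> max B 0" using assms(4)[OF True] by simp
      moreover have "\<tau> powr (-\<alpha>-1) \<le> r powr (-\<alpha>-1)"
        using True assms by (intro powr_mono2') auto
      ultimately have "max (h \<tau>) 0 * \<tau> powr (- \<alpha> - 1) \<le> c"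
        unfolding c_def by (intro mult_mono) auto
      then show ?thesis using True by (simp add: ennreal_leI)
    qed simp
  qed
  also have "\<dots> = ennreal c * ennreal (t - r)"
    using assms by (simp add: nn_integral_cmult_indicator)
  also have "\<dots> < \<infinity>" by (simp add: ennreal_mult_less_top)
  finally show ?thesis .
qed

section \<open>Regularity of the data\<close>

lemma C1_on_continuous_on: "C1_on S g \<Longrightarrow> continuous_on S g"
  unfolding C1_on_def by (auto intro: DERIV_continuous_on)

lemma C1_on_uminus: "C1_on S g \<Longrightarrow> C1_on S (\<lambda>x. - g x)"
  unfolding C1_on_def by (metis (full_types) continuous_on_minus DERIV_minus)

lemma C1_on_lipschitz_Icc:
  assumes "C1_on {0<..T} g" "0 < a"
  obtains M where "M \<ge> 0" "\<And>x y. x \<in> {a..T} \<Longrightarrow> y \<in> {a..T} \<Longrightarrow> \<bar>g x - g y\<bar> \<le> M * \<bar>x - y\<bar>"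
proof -
  obtain g' where cont: "continuous_on {0<..T} g'"
    and deriv: "\<And>t. t \<in> {0<..T} \<Longrightarrow> (g has_real_derivative g' t) (at t within {0<..T})"
    using assms(1) unfolding C1_on_def by blast
  have sub: "{a..T} \<subseteq> {0<..T}" using assms(2) by auto
  have "bounded (g' ` {a..T})"
    by (intro compact_imp_bounded compact_continuous_image continuous_on_subset[OF cont sub]) simp
  then obtain B where B: "\<forall>x\<in>{a..T}. norm (g' x) \<le> B" by (auto simp: bounded_iff)
  have "\<bar>g x - g y\<bar> \<le> max B 0 * \<bar>x - y\<bar>" if "x \<in> {a..T}" "y \<in> {a..T}" for x y
    using field_differentiable_bound[of "{a..T}" g g' "max B 0" x y] that B sub
    by (force intro: DERIV_subset deriv)
  then show ?thesis using that[of "max B 0"] by simp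
qed

lemma increment_set_borel_measurable:
  fixes g :: "real \<Rightarrow> real"
  assumes "continuous_on {0<..T} g" "0 < r" "r < t" "t \<le> T"
  shows "set_borel_measurable lborel {0<..r} (\<lambda>\<tau>. g t - g (t - \<tau>))"
  unfolding set_borel_measurable_def measurable_lborel2
proof (rule borel_measurable_continuous_on_indicator)
  have "continuous_on {0<..r} (\<lambda>\<tau>. g (t - \<tau>))"
    by (rule continuous_on_compose2[OF assms(1)]) (use assms in \<open>auto intro!: continuous_intros\<close>)
  then show "continuous_on {0<..r} (\<lambda>\<tau>. g t - g (t - \<tau>))"
    by (intro continuous_intros)
qed simp

lemma lsc_on_uminus: "lsc_on S f \<Longrightarrow> usc_on S (\<lambda>x. - f x)"
  unfolding lsc_on_def usc_on_def
proof (intro ballI allI impI)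
  fix x a assume "\<forall>x\<in>S. \<forall>a. a < f x \<longrightarrow> (\<forall>\<^sub>F y in at x within S. a < f y)"
    and "x \<in> S" "- f x < a"
  then have "\<forall>\<^sub>F y in at x within S. - a < f y" by auto
  then show "\<forall>\<^sub>F y in at x within S. - f y < a" by (rule eventually_mono) auto
qed

lemma usc_on_openin_sublevel:
  fixes f :: "real \<Rightarrow> real"
  assumes "usc_on S f"
  shows "openin (top_of_set S) {x\<in>S. f x < a}"
  unfolding openin_euclidean_subtopology_iff
proof (intro conjI ballI)
  fix x assume x: "x \<in> {x\<in>S. f x < a}"
  then have "\<forall>\<^sub>F y in at x within S. f y < a" using assms unfolding usc_on_def by auto
  then obtain d where "d > 0" "\<forall>y\<in>S. y \<noteq> x \<and> dist y x < d \<longrightarrow> f y < a"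
    by (auto simp: eventually_at)
  then show "\<exists>e>0. \<forall>x'\<in>S. dist x' x < e \<longrightarrow> x' \<in> {x\<in>S. f x < a}"
    using x by (intro exI[of _ d]) auto
qed auto

lemma usc_on_Icc_borel_measurable:
  fixes f :: "real \<Rightarrow> real"
  assumes "usc_on {a..b} f"
  shows "(\<lambda>x. indicator {a..b} x *\<^sub>R f x) \<in> borel_measurable borel"
proof (rule borel_measurable_iff_less[THEN iffD2], intro allI)
  fix c :: real
  obtain U where U: "open U" "{x\<in>{a..b}. f x < c} = {a..b} \<inter> U"
    using usc_on_openin_sublevel[OF assms, of c] unfolding openin_open by blast
  have "f x < c \<longleftrightarrow> x \<in> U" if "x \<in> {a..b}" for x
    using U(2) that by blast
  then have "{x \<in> space borel. indicator {a..b} x *\<^sub>R f x < c} =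
      ({a..b} \<inter> U) \<union> (if 0 < c then - {a..b} else {})"
    by (auto simp: indicator_def)
  also have "\<dots> \<in> sets borel" using U(1) by auto
  finally show "{x \<in> space borel. indicator {a..b} x *\<^sub>R f x < c} \<in> sets borel" .
qed

lemma usc_on_increment_set_borel_measurable:
  fixes f :: "real \<Rightarrow> real"
  assumes "usc_on {0..T} f" "t \<le> T" "A \<subseteq> {0..t}" "A \<in> sets borel"
  shows "set_borel_measurable lborel A (\<lambda>\<tau>. f t - f (t - \<tau>))"
proof -
  define F where "F = (\<lambda>x. indicator {0..T} x *\<^sub>R f x)"
  have F_measurable[measurable]: "F \<in> borel_measurable borel"
    unfolding F_def by (rule usc_on_Icc_borel_measurable[OF assms(1)])
  note [measurable] = \<open>A \<in> sets borel\<close>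
  have "(\<lambda>\<tau>. indicator A \<tau> *\<^sub>R (f t - f (t - \<tau>))) = (\<lambda>\<tau>. indicator A \<tau> *\<^sub>R (f t - F (t - \<tau>)))"
    using assms(2,3) by (auto simp: fun_eq_iff indicator_def F_def)
  moreover have "(\<lambda>\<tau>. indicator A \<tau> *\<^sub>R (f t - F (t - \<tau>))) \<in> borel_measurable borel"
    by measurable
  ultimately show ?thesis unfolding set_borel_measurable_def by simp
qed

lemma usc_on_compact_bounded_above:
  fixes f :: "real \<Rightarrow> real"
  assumes "usc_on S f" "compact S"
  obtains B where "\<And>x. x \<in> S \<Longrightarrow> f x \<le> B"
proof -
  have "\<forall>n::nat. \<exists>U. open U \<and> {x\<in>S. f x < real n} = S \<inter> U"
    using usc_on_openin_sublevel[OF assms(1)] unfolding openin_open by blast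
  then obtain U where U: "\<And>n. open (U n)" "\<And>n. {x\<in>S. f x < real n} = S \<inter> U n"
    by metis
  have "S \<subseteq> (\<Union>n. U n)"
  proof
    fix x assume "x \<in> S"
    obtain n where "f x < real n" using reals_Archimedean2 by blast
    then show "x \<in> (\<Union>n. U n)" using U(2)[of n] \<open>x \<in> S\<close> by blast
  qed
  then obtain N where N: "finite N" "S \<subseteq> (\<Union>n\<in>N. U n)"
    using compactE_image[OF assms(2), of UNIV U] U(1) by auto
  have "f x \<le> real (Max (insert 0 N))" if "x \<in> S" for x
  proof -
    obtain n where n: "n \<in> N" "x \<in> U n" using N(2) \<open>x \<in> S\<close> by blast
    then have "f x < real n" using U(2)[of n] \<open>x \<in> S\<close> by blast
    moreover have "n \<le> Max (insert 0 N)" using N(1) n(1) by simp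
    ultimately show ?thesis by linarith
  qed
  then show ?thesis using that by blast
qed

section \<open>The operator J\<close>

definition J_integrand :: "real \<Rightarrow> real \<Rightarrow> (real \<Rightarrow> real) \<Rightarrow> real \<Rightarrow> real \<Rightarrow> real" where
  "J_integrand \<alpha> r g t \<tau> = indicator {0<..r} \<tau> * ((g t - g (t - \<tau>)) * \<tau> powr (-\<alpha>-1))"

lemma J_integrand_0: "J_integrand \<alpha> 0 g t = (\<lambda>_. 0)"
  by (simp add: fun_eq_iff J_integrand_def)

lemma
  assumes "0 < \<alpha>" "\<alpha> < 1" "C1_on {0<..T} g" "t \<le> T" "0 < r" "r < t"
  shows J_exists_C1: "J_exists \<alpha> r g t"
    and J_val_C1: "J_val \<alpha> r g t = \<alpha> / Gamma (1 - \<alpha>) *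
        (LINT \<tau>:{0<..r}|lborel. (g t - g (t - \<tau>)) * \<tau> powr (-\<alpha>-1))"
    and integrable_J_integrand: "integrable lborel (J_integrand \<alpha> r g t)"
proof -
  have "0 < t - r" using assms by simp
  then obtain M where M: "\<And>x y. x \<in> {t-r..T} \<Longrightarrow> y \<in> {t-r..T} \<Longrightarrow> \<bar>g x - g y\<bar> \<le> M * \<bar>x - y\<bar>"
    using C1_on_lipschitz_Icc[OF assms(3)] by blast
  have bound: "\<bar>g t - g (t - \<tau>)\<bar> \<le> M * \<tau>" if "\<tau> \<in> {0<..r}" for \<tau>
    using M[of t "t - \<tau>"] that assms by auto
  note meas = increment_set_borel_measurable[OF C1_on_continuous_on[OF assms(3)] assms(5,6,4)]
  show "J_exists \<alpha> r g t"
    unfolding J_exists_def using imp_exists_abs_linear_bound[OF assms(2,5) meas bound] .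
  show "J_val \<alpha> r g t = \<alpha> / Gamma (1 - \<alpha>) *
        (LINT \<tau>:{0<..r}|lborel. (g t - g (t - \<tau>)) * \<tau> powr (-\<alpha>-1))"
    unfolding J_val_def using imp_val_abs_linear_bound[OF assms(2,5) meas bound] assms by simp
  show "integrable lborel (J_integrand \<alpha> r g t)"
    using set_integrable_abs_linear_bound[OF assms(2,5) meas bound]
    unfolding set_integrable_def J_integrand_def by simp
qed

lemma J_val_eq_integral_J_integrand:
  assumes "0 < \<alpha>" "\<alpha> < 1" "C1_on {0<..T} g" "t \<le> T" "0 \<le> r" "r < t"
  shows "J_val \<alpha> r g t = \<alpha> / Gamma (1 - \<alpha>) * integral\<^sup>L lborel (J_integrand \<alpha> r g t)"
proof (cases "r = 0")
  case True
  then show ?thesis by (simp add: J_val_def J_integrand_0)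
next
  case False
  then show ?thesis
    using J_val_C1[OF assms(1-4) _ assms(6)] assms(5)
    by (simp add: J_integrand_def[abs_def] set_lebesgue_integral_def)
qed

lemma tendsto_alpha_div_Gamma:
  fixes \<alpha> :: real
  assumes "als \<longlonglongrightarrow> \<alpha>" "0 < \<alpha>" "\<alpha> < 1"
  shows "(\<lambda>j. als j / Gamma (1 - als j)) \<longlonglongrightarrow> \<alpha> / Gamma (1 - \<alpha>)"
proof (intro tendsto_divide assms(1))
  have "1 - \<alpha> \<notin> \<int>\<^sub>\<le>\<^sub>0" using assms nonpos_Ints_nonpos[of "1 - \<alpha>"] by auto
  then have "isCont Gamma (1 - \<alpha>)"
    using isCont_Gamma[where f = "\<lambda>x::real. x" and z = "1 - \<alpha>"] by simp
  then show "(\<lambda>j. Gamma (1 - als j)) \<longlonglongrightarrow> Gamma (1 - \<alpha>)"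
    by (rule isCont_tendsto_compose) (intro tendsto_intros assms(1))
  have "0 < Gamma (1 - \<alpha>)" using assms by (intro Gamma_real_pos) simp
  then show "Gamma (1 - \<alpha>) \<noteq> 0" by simp
qed

lemma powr_neg_le_powr_neg_plus_1:
  assumes "0 < (\<tau>::real)" "0 \<le> a" "a \<le> \<beta>"
  shows "\<tau> powr (-a) \<le> \<tau> powr (-\<beta>) + 1"
proof (cases "\<tau> \<le> 1")
  case True
  then have "\<tau> powr (-a) \<le> \<tau> powr (-\<beta>)" using assms by (intro powr_mono') auto
  then show ?thesis by simp
next
  case False
  then have "\<tau> powr (-a) \<le> \<tau> powr 0" using assms by (intro powr_mono) auto
  then show ?thesis using assms by (simp add: add_increasing)
qed

lemma J_integrand_dominated:
  assumes lip: "\<And>x y. x \<in> {\<delta>..T} \<Longrightarrow> y \<in> {\<delta>..T} \<Longrightarrow> \<bar>g x - g y\<bar> \<le> M * \<bar>x - y\<bar>"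
    and "0 \<le> M" "0 \<le> \<alpha>" "\<alpha> \<le> \<beta>" "0 < \<delta>" "\<delta> < t - r" "t \<le> T"
  shows "norm (J_integrand \<alpha> r g t \<tau>) \<le> indicator {0<..T} \<tau> * (M * (\<tau> powr (-\<beta>) + 1))"
proof (cases "\<tau> \<in> {0<..r}")
  case False
  then show ?thesis using \<open>0 \<le> M\<close> by (simp add: J_integrand_def indicator_def)
next
  case True
  have "\<bar>g t - g (t - \<tau>)\<bar> \<le> M * \<tau>"
    using lip[of t "t - \<tau>"] True assms by auto
  then have "norm (J_integrand \<alpha> r g t \<tau>) \<le> M * \<tau> * \<tau> powr (-\<alpha>-1)"
    using True by (simp add: J_integrand_def abs_mult mult_right_mono)
  also have "\<dots> = M * \<tau> powr (-\<alpha>)" using mult_powr_kernel[of \<tau> \<alpha>] True by simp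
  also have "\<dots> \<le> M * (\<tau> powr (-\<beta>) + 1)"
    using powr_neg_le_powr_neg_plus_1[of \<tau> \<alpha> \<beta>] True assms by (intro mult_left_mono) auto
  moreover have "\<tau> \<le> T" using True assms by simp
  ultimately show ?thesis using True by simp
qed

lemma J_integrand_tendsto:
  assumes cont: "continuous_on {0<..T} g"
    and H: "\<And>j. ts j \<in> {0<..T} \<and> rs j \<in> {0<..<ts j}"
    and lim: "ts \<longlonglongrightarrow> th" "rs \<longlonglongrightarrow> rh" "als \<longlonglongrightarrow> \<alpha>"
    and "th \<in> {0<..T}" "rh < th" "\<tau> \<noteq> rh"
  shows "(\<lambda>j. J_integrand (als j) (rs j) g (ts j) \<tau>) \<longlonglongrightarrow> J_integrand \<alpha> rh g th \<tau>"
proof -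
  consider "\<tau> \<le> 0" | "0 < \<tau>" "\<tau> < rh" | "rh < \<tau>"
    using \<open>\<tau> \<noteq> rh\<close> by linarith
  then show ?thesis
  proof cases
    case 1
    then show ?thesis by (simp add: J_integrand_def)
  next
    case 2
    have ev: "eventually (\<lambda>j. \<tau> < rs j) sequentially"
      by (rule order_tendstoD(1)[OF lim(2) 2(2)])
    have "eventually (\<lambda>j. ts j - \<tau> \<in> {0<..T}) sequentially"
    proof (rule eventually_mono[OF ev])
      fix j assume "\<tau> < rs j"
      then show "ts j - \<tau> \<in> {0<..T}" using H[of j] 2 by auto
    qed
    moreover have "th - \<tau> \<in> {0<..T}" using 2 \<open>th \<in> {0<..T}\<close> \<open>rh < th\<close> by auto
    ultimately have "(\<lambda>j. g (ts j - \<tau>)) \<longlonglongrightarrow> g (th - \<tau>)"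
      using continuous_on_tendsto_compose[OF cont tendsto_diff[OF lim(1) tendsto_const]] by blast
    moreover have "(\<lambda>j. g (ts j)) \<longlonglongrightarrow> g th"
      by (rule continuous_on_tendsto_compose[OF cont lim(1)]) (use H \<open>th \<in> {0<..T}\<close> in auto)
    moreover have "(\<lambda>j. \<tau> powr (- als j - 1)) \<longlonglongrightarrow> \<tau> powr (- \<alpha> - 1)"
      by (rule tendsto_powr) (use 2 in \<open>auto intro!: tendsto_intros lim\<close>)
    ultimately have "(\<lambda>j. (g (ts j) - g (ts j - \<tau>)) * \<tau> powr (- als j - 1))
        \<longlonglongrightarrow> (g th - g (th - \<tau>)) * \<tau> powr (- \<alpha> - 1)"
      by (intro tendsto_mult tendsto_diff)
    moreover have "eventually (\<lambda>j. (g (ts j) - g (ts j - \<tau>)) * \<tau> powr (- als j - 1)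
                      = J_integrand (als j) (rs j) g (ts j) \<tau>) sequentially"
      by (rule eventually_mono[OF ev]) (use 2 in \<open>simp add: J_integrand_def\<close>)
    ultimately have "(\<lambda>j. J_integrand (als j) (rs j) g (ts j) \<tau>)
        \<longlonglongrightarrow> (g th - g (th - \<tau>)) * \<tau> powr (- \<alpha> - 1)"
      by (rule Lim_transform_eventually)
    then show ?thesis using 2 by (simp add: J_integrand_def)
  next
    case 3
    have "eventually (\<lambda>j. J_integrand (als j) (rs j) g (ts j) \<tau> = 0) sequentially"
      by (rule eventually_mono[OF order_tendstoD(2)[OF lim(2) 3]]) (simp add: J_integrand_def)
    then have "(\<lambda>j. J_integrand (als j) (rs j) g (ts j) \<tau>) \<longlonglongrightarrow> 0"
      by (rule tendsto_eventually)
    then show ?thesis using 3 by (simp add: J_integrand_def)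
  qed
qed

lemma J_integrand_eventually_dominated:
  assumes "\<alpha> < 1" and g: "C1_on {0<..T} g"
    and H: "\<And>j. ts j \<in> {0<..T} \<and> rs j \<in> {0<..<ts j} \<and> als j \<in> {0<..<1}"
    and lim: "ts \<longlonglongrightarrow> th" "rs \<longlonglongrightarrow> rh" "als \<longlonglongrightarrow> \<alpha>" and "rh < th"
  obtains \<beta> N M where "\<beta> < 1"
    "\<And>j \<tau>. N \<le> j \<Longrightarrow> norm (J_integrand (als j) (rs j) g (ts j) \<tau>)
                        \<le> indicator {0<..T} \<tau> * (M * (\<tau> powr (-\<beta>) + 1))"
proof -
  define \<delta> where "\<delta> = (th - rh) / 2"
  define \<beta> where "\<beta> = (1 + \<alpha>) / 2"
  have \<delta>: "0 < \<delta>" "\<delta> < th - rh" and \<beta>: "\<alpha> < \<beta>" "\<beta> < 1"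
    using assms by (auto simp: \<delta>_def \<beta>_def)
  obtain M where "M \<ge> 0" and lip: "\<And>x y. x \<in> {\<delta>..T} \<Longrightarrow> y \<in> {\<delta>..T} \<Longrightarrow> \<bar>g x - g y\<bar> \<le> M * \<bar>x - y\<bar>"
    using C1_on_lipschitz_Icc[OF g \<delta>(1)] by blast
  have "eventually (\<lambda>j. \<delta> < ts j - rs j \<and> als j < \<beta>) sequentially"
    using order_tendstoD(1)[OF tendsto_diff[OF lim(1,2)] \<delta>(2)] order_tendstoD(2)[OF lim(3) \<beta>(1)]
    by (rule eventually_conj)
  then obtain N where N: "\<And>j. N \<le> j \<Longrightarrow> \<delta> < ts j - rs j \<and> als j < \<beta>"
    unfolding eventually_sequentially by blast
  have "norm (J_integrand (als j) (rs j) g (ts j) \<tau>) \<le> indicator {0<..T} \<tau> * (M * (\<tau> powr (-\<beta>) + 1))"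
    if "N \<le> j" for j \<tau>
    using N[OF that] H[of j] \<delta> \<open>M \<ge> 0\<close> by (intro J_integrand_dominated[OF lip]) auto
  with \<beta>(2) show ?thesis using that by blast
qed

lemma integrable_indicator_powr_plus_1:
  assumes "\<beta> < 1" "0 < T"
  shows "integrable lborel (\<lambda>\<tau>::real. indicator {0<..T} \<tau> * (M * (\<tau> powr (-\<beta>) + 1)))"
proof -
  have "set_integrable lborel {0<..T} (\<lambda>\<tau>::real. \<tau> powr (-\<beta>))"
    using set_integrable_powr_Ioc[of "-\<beta>" T] assms by simp
  moreover have "set_integrable lborel {0<..T} (\<lambda>\<tau>::real. 1)"
    unfolding set_integrable_def using assms by (simp add: integrable_real_indicator)
  ultimately have "set_integrable lborel {0<..T} (\<lambda>\<tau>::real. \<tau> powr (-\<beta>) + 1)"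
    by (rule set_integral_add)
  then have "set_integrable lborel {0<..T} (\<lambda>\<tau>::real. M * (\<tau> powr (-\<beta>) + 1))"
    by simp
  then show ?thesis unfolding set_integrable_def by simp
qed

lemma J_val_tendsto:
  assumes "T > 0" "0 < \<alpha>" "\<alpha> < 1" and g: "C1_on {0<..T} g"
    and H: "\<And>j. ts j \<in> {0<..T} \<and> rs j \<in> {0<..<ts j} \<and> als j \<in> {0<..<1}"
    and lim: "ts \<longlonglongrightarrow> th" "rs \<longlonglongrightarrow> rh" "als \<longlonglongrightarrow> \<alpha>"
    and th: "th \<in> {0<..T}" and rh: "rh \<in> {0..<th}"
  shows "(\<lambda>j. J_val (als j) (rs j) g (ts j)) \<longlonglongrightarrow> J_val \<alpha> rh g th"
proof -
  have "rh < th" using rh by simp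
  obtain M \<beta> N where "\<beta> < 1" and dom: "\<And>j \<tau>. N \<le> j \<Longrightarrow> norm (J_integrand (als j) (rs j) g (ts j) \<tau>)
                        \<le> indicator {0<..T} \<tau> * (M * (\<tau> powr (-\<beta>) + 1))"
    using J_integrand_eventually_dominated[OF \<open>\<alpha> < 1\<close> g H lim \<open>rh < th\<close>] by blast
  have J_int: "integrable lborel (J_integrand a r g t)" if "0 < a" "a < 1" "t \<in> {0<..T}" "r \<in> {0..<t}"
    for a r t
  proof (cases "r = 0")
    case True
    then show ?thesis by (simp add: J_integrand_0)
  next
    case False
    then show ?thesis using integrable_J_integrand[OF that(1,2) g, of t r] that by simp
  qed
  have pointwise: "(\<lambda>j. J_integrand (als j) (rs j) g (ts j) \<tau>) \<longlonglongrightarrow> J_integrand \<alpha> rh g th \<tau>"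
    if "\<tau> \<noteq> rh" for \<tau>
    using J_integrand_tendsto[OF C1_on_continuous_on[OF g] _ lim th _ that] H rh by simp
  have "(\<lambda>i. integral\<^sup>L lborel (J_integrand (als (i + N)) (rs (i + N)) g (ts (i + N))))
          \<longlonglongrightarrow> integral\<^sup>L lborel (J_integrand \<alpha> rh g th)"
  proof (rule integral_dominated_convergence)
    show "integrable lborel (\<lambda>\<tau>. indicator {0<..T} \<tau> * (M * (\<tau> powr (-\<beta>) + 1)))"
      using integrable_indicator_powr_plus_1[OF \<open>\<beta> < 1\<close> \<open>T > 0\<close>] .
    show "AE \<tau> in lborel. norm (J_integrand (als (i + N)) (rs (i + N)) g (ts (i + N)) \<tau>)
            \<le> indicator {0<..T} \<tau> * (M * (\<tau> powr (-\<beta>) + 1))" for i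
      using dom[of "i + N"] by simp
    show "AE \<tau> in lborel. (\<lambda>i. J_integrand (als (i + N)) (rs (i + N)) g (ts (i + N)) \<tau>)
            \<longlonglongrightarrow> J_integrand \<alpha> rh g th \<tau>"
      using AE_lborel_singleton[of rh]
      by (rule eventually_mono) (use pointwise LIMSEQ_ignore_initial_segment in blast)
    show "J_integrand \<alpha> rh g th \<in> borel_measurable lborel"
      using J_int[OF assms(2,3) th rh] by simp
    show "J_integrand (als (i + N)) (rs (i + N)) g (ts (i + N)) \<in> borel_measurable lborel" for i
      using J_int[of "als (i + N)" "ts (i + N)" "rs (i + N)"] H[of "i + N"] by simp
  qed
  then have "(\<lambda>j. integral\<^sup>L lborel (J_integrand (als j) (rs j) g (ts j)))
               \<longlonglongrightarrow> integral\<^sup>L lborel (J_integrand \<alpha> rh g th)"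
    by (rule LIMSEQ_offset)
  from tendsto_mult[OF tendsto_alpha_div_Gamma[OF lim(3) assms(2,3)] this] show ?thesis
    using J_val_eq_integral_J_integrand[OF _ _ g] H th rh assms(2,3) by (simp add: less_imp_le)
qed

section \<open>The operator K\<close>

lemma ereal_add_mult_diff_gt_MInfty:
  assumes "0 < k" "B < \<infinity>"
  shows "-\<infinity> < ereal c + ereal k * (enn2ereal A - enn2ereal B)"
  using assms by (cases A rule: ennreal_cases; cases B rule: ennreal_cases) auto

lemma ereal_add_mult_diff_swap:
  assumes "0 < k" "A < \<infinity> \<or> B < \<infinity>"
  shows "ereal (-c) + ereal k * (enn2ereal B - enn2ereal A) =
         - (ereal c + ereal k * (enn2ereal A - enn2ereal B))"
  using assms by (cases A rule: ennreal_cases; cases B rule: ennreal_cases) (auto simp: algebra_simps)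

lemma alpha_div_Gamma_pos: "0 < \<alpha> \<Longrightarrow> \<alpha> < 1 \<Longrightarrow> 0 < \<alpha> / Gamma (1 - \<alpha>::real)"
  using Gamma_real_pos[of "1 - \<alpha>"] by simp

lemma
  fixes f :: "real \<Rightarrow> real"
  assumes f: "usc_on {0..T} f" and "0 < \<alpha>" "\<alpha> < 1" "t \<le> T" "0 < r" "r < t"
  shows K_makes_sense_usc: "K_makes_sense \<alpha> r f t"
    and K_val_usc_gt_MInfty: "-\<infinity> < K_val \<alpha> r f t"
proof -
  obtain S where S: "\<And>x. x \<in> {0..T} \<Longrightarrow> f x \<le> S"
    using usc_on_compact_bounded_above[OF f compact_Icc] by blast
  have fin: "wint \<alpha> (\<lambda>\<tau>. - (f t - f (t - \<tau>))) r t < \<infinity>"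
    using S assms by (intro wint_less_top_bounded[where B = "S - f t"]) auto
  moreover have "set_borel_measurable lborel {r..t} (\<lambda>\<tau>. f t - f (t - \<tau>))"
    using assms by (intro usc_on_increment_set_borel_measurable[OF f]) auto
  ultimately show "K_makes_sense \<alpha> r f t"
    using \<open>0 < r\<close> by (simp add: K_makes_sense_def prop_makes_sense_def)
  show "-\<infinity> < K_val \<alpha> r f t"
    unfolding K_val_def prop_val_def if_not_P[OF less_imp_neq[OF \<open>0 < r\<close>, symmetric]]
    by (rule ereal_add_mult_diff_gt_MInfty[OF alpha_div_Gamma_pos[OF assms(2,3)] fin])
qed

lemma usc_on_max_point_increment_bound:
  fixes f g :: "real \<Rightarrow> real"
  assumes f: "usc_on {0..T} f" and g: "C1_on {0<..T} g" and th: "th \<in> {0<..T}"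
    and max: "\<And>s. s \<in> {0<..T} \<Longrightarrow> f s - g s \<le> f th - g th"
  obtains C where "\<And>\<tau>. \<tau> \<in> {0<..th} \<Longrightarrow> - (f th - f (th - \<tau>)) \<le> C * \<tau>"
proof -
  define \<delta> where "\<delta> = th / 2"
  have \<delta>: "0 < \<delta>" "\<delta> < th" using th by (auto simp: \<delta>_def)
  obtain M where "M \<ge> 0" and lip: "\<And>x y. x \<in> {\<delta>..T} \<Longrightarrow> y \<in> {\<delta>..T} \<Longrightarrow> \<bar>g x - g y\<bar> \<le> M * \<bar>x - y\<bar>"
    using C1_on_lipschitz_Icc[OF g \<delta>(1)] by blast
  obtain S where S: "\<And>x. x \<in> {0..T} \<Longrightarrow> f x \<le> S"
    using usc_on_compact_bounded_above[OF f compact_Icc] by blast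
  define B where "B = max (S - f th) 0"
  have "f (th - \<tau>) - f th \<le> (M + B / \<delta>) * \<tau>" if \<tau>: "\<tau> \<in> {0<..th}" for \<tau>
  proof (cases "\<tau> \<le> \<delta>")
    case True
    have "f (th - \<tau>) - f th \<le> g (th - \<tau>) - g th" using max[of "th - \<tau>"] True \<tau> \<delta> th by auto
    also have "\<dots> \<le> M * \<tau>" using lip[of "th - \<tau>" th] True \<tau> th by (auto simp: \<delta>_def)
    also have "\<dots> \<le> (M + B / \<delta>) * \<tau>" using \<tau> \<delta> by (intro mult_right_mono) (auto simp: B_def)
    finally show ?thesis .
  next
    case False
    have "f (th - \<tau>) - f th \<le> B" using S[of "th - \<tau>"] \<tau> th by (auto simp: B_def)
    also have "\<dots> = B / \<delta> * \<delta>" using \<delta> by simp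
    also have "\<dots> \<le> B / \<delta> * \<tau>" using False \<delta> by (intro mult_left_mono) (auto simp: B_def)
    also have "\<dots> \<le> (M + B / \<delta>) * \<tau>" using \<tau> \<open>M \<ge> 0\<close> by (intro mult_right_mono) auto
    finally show ?thesis .
  qed
  then show ?thesis using that[of "M + B / \<delta>"] by simp
qed

lemma
  fixes f g :: "real \<Rightarrow> real"
  assumes f: "usc_on {0..T} f" and g: "C1_on {0<..T} g" and "0 < \<alpha>" "\<alpha> < 1"
    and th: "th \<in> {0<..T}" and max: "\<And>s. s \<in> {0<..T} \<Longrightarrow> f s - g s \<le> f th - g th"
  shows K_makes_sense_usc_max_point: "K_makes_sense \<alpha> 0 f th"
    and K_val_usc_max_point_gt_MInfty: "-\<infinity> < K_val \<alpha> 0 f th"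
proof -
  obtain C where C: "\<And>\<tau>. \<tau> \<in> {0<..th} \<Longrightarrow> - (f th - f (th - \<tau>)) \<le> C * \<tau>"
    using usc_on_max_point_increment_bound[OF f g th max] by blast
  have meas: "set_borel_measurable lborel {0<..th} (\<lambda>\<tau>. f th - f (th - \<tau>))"
    using th by (intro usc_on_increment_set_borel_measurable[OF f]) auto
  have fin: "imp_part_finite \<alpha> (\<lambda>\<tau>. - (f th - f (th - \<tau>))) th"
    using th C set_borel_measurable_uminus_iff[THEN iffD2, OF meas]
    by (intro imp_part_finite_linear_bound[OF \<open>\<alpha> < 1\<close>]) auto
  show "K_makes_sense \<alpha> 0 f th"
    unfolding K_makes_sense_def imp_makes_sense_def using meas fin by simp
  show "-\<infinity> < K_val \<alpha> 0 f th"
    unfolding K_val_def imp_val_def if_P[OF refl]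
    by (rule ereal_add_mult_diff_gt_MInfty[OF alpha_div_Gamma_pos[OF assms(3,4)] Lim_wint_less_top[OF fin]])
qed

lemma K_makes_sense_uminus: "K_makes_sense \<alpha> r (\<lambda>x. - f x) t \<longleftrightarrow> K_makes_sense \<alpha> r f t"
proof -
  have "(\<lambda>\<tau>. - f t - - f (t - \<tau>)) = (\<lambda>\<tau>. - (f t - f (t - \<tau>)))" by simp
  then show ?thesis
    unfolding K_makes_sense_def prop_makes_sense_def imp_makes_sense_def
    by (simp only: minus_minus set_borel_measurable_uminus_iff) auto
qed

lemma K_val_uminus:
  assumes "0 < \<alpha>" "\<alpha> < 1" "K_makes_sense \<alpha> r f t"
  shows "K_val \<alpha> r (\<lambda>x. - f x) t = - K_val \<alpha> r f t"
proof -
  define c where "c = (f t - f 0) / (t powr \<alpha> * Gamma (1 - \<alpha>))"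
  define k where "k = \<alpha> / Gamma (1 - \<alpha>)"
  have k: "0 < k" unfolding k_def using alpha_div_Gamma_pos[OF assms(1,2)] .
  have incr: "(\<lambda>\<tau>. - f t - - f (t - \<tau>)) = (\<lambda>\<tau>. - (f t - f (t - \<tau>)))" by simp
  have const: "(- f t - - f 0) / (t powr \<alpha> * Gamma (1 - \<alpha>)) = - c"
    unfolding c_def minus_divide_left by simp
  show ?thesis
  proof (cases "r = 0")
    case True
    define A where "A = Lim (at_right 0) (\<lambda>\<rho>. wint \<alpha> (\<lambda>\<tau>. f t - f (t - \<tau>)) \<rho> t)"
    define B where "B = Lim (at_right 0) (\<lambda>\<rho>. wint \<alpha> (\<lambda>\<tau>. - (f t - f (t - \<tau>))) \<rho> t)"
    have "A < \<infinity> \<or> B < \<infinity>"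
      using assms(3) True Lim_wint_less_top
      unfolding K_makes_sense_def imp_makes_sense_def A_def B_def by auto
    then show ?thesis
      unfolding K_val_def imp_val_def if_P[OF True] incr const minus_minus
      by (fold c_def k_def A_def B_def) (rule ereal_add_mult_diff_swap[OF k])
  next
    case False
    define A where "A = wint \<alpha> (\<lambda>\<tau>. f t - f (t - \<tau>)) r t"
    define B where "B = wint \<alpha> (\<lambda>\<tau>. - (f t - f (t - \<tau>))) r t"
    have "A < \<infinity> \<or> B < \<infinity>"
      using assms(3) False unfolding K_makes_sense_def prop_makes_sense_def A_def B_def by auto
    then show ?thesis
      unfolding K_val_def prop_val_def if_not_P[OF False] incr const minus_minus
      by (fold c_def k_def A_def B_def) (rule ereal_add_mult_diff_swap[OF k])
  qed
qed

lemma K_val_lt_PInfty_if_uminus: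
  assumes "0 < \<alpha>" "\<alpha> < 1"
    and "K_makes_sense \<alpha> r (\<lambda>x. - f x) t" "-\<infinity> < K_val \<alpha> r (\<lambda>x. - f x) t"
  shows "K_makes_sense \<alpha> r f t" "K_val \<alpha> r f t < \<infinity>"
proof -
  show sense: "K_makes_sense \<alpha> r f t" using assms(3) K_makes_sense_uminus by blast
  show "K_val \<alpha> r f t < \<infinity>"
    using assms(4) K_val_uminus[OF assms(1,2) sense] by (simp add: ereal_uminus_less_reorder)
qed

lemma
  fixes f :: "real \<Rightarrow> real"
  assumes "lsc_on {0..T} f" "0 < \<alpha>" "\<alpha> < 1" "t \<le> T" "0 < r" "r < t"
  shows K_makes_sense_lsc: "K_makes_sense \<alpha> r f t"
    and K_val_lsc_lt_PInfty: "K_val \<alpha> r f t < \<infinity>"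
  using K_val_lt_PInfty_if_uminus[OF assms(2,3)
      K_makes_sense_usc[OF lsc_on_uminus[OF assms(1)] assms(2-)]
      K_val_usc_gt_MInfty[OF lsc_on_uminus[OF assms(1)] assms(2-)]] by auto

lemma
  fixes f g :: "real \<Rightarrow> real"
  assumes f: "lsc_on {0..T} f" and g: "C1_on {0<..T} g" and \<alpha>: "0 < \<alpha>" "\<alpha> < 1"
    and th: "th \<in> {0<..T}" and min: "\<And>s. s \<in> {0<..T} \<Longrightarrow> f th - g th \<le> f s - g s"
  shows K_makes_sense_lsc_min_point: "K_makes_sense \<alpha> 0 f th"
    and K_val_lsc_min_point_lt_PInfty: "K_val \<alpha> 0 f th < \<infinity>"
proof -
  have "- f s - - g s \<le> - f th - - g th" if "s \<in> {0<..T}" for s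
    using min[OF that] by simp
  note usc = lsc_on_uminus[OF f] C1_on_uminus[OF g] \<alpha> th this
  show "K_makes_sense \<alpha> 0 f th" "K_val \<alpha> 0 f th < \<infinity>"
    using K_val_lt_PInfty_if_uminus[OF \<alpha> K_makes_sense_usc_max_point[OF usc]
        K_val_usc_max_point_gt_MInfty[OF usc]] by auto
qed

theorem proposition2p4:
  fixes T \<alpha> :: real and g :: "real \<Rightarrow> real"
  assumes "T > 0" and "\<alpha> \<in> {0<..<1}" and "C1_on {0<..T} g"
  shows
    \<comment> \<open>(i)\<close>
    "(\<forall>t\<in>{0<..T}. \<forall>r\<in>{0<..<t}. J_exists \<alpha> r g t)
     \<comment> \<open>(ii),(iii) for upper semicontinuous f\<close>
     \<and> (\<forall>f. usc_on {0..T} f \<longrightarrow>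
          (\<forall>t\<in>{0<..T}. \<forall>r\<in>{0<..<t}. K_makes_sense \<alpha> r f t \<and> K_val \<alpha> r f t > -\<infinity>)
        \<and> (\<forall>th\<in>{0<..T}. (\<forall>s\<in>{0<..T}. f s - g s \<le> f th - g th) \<longrightarrow>
              K_makes_sense \<alpha> 0 f th \<and> K_val \<alpha> 0 f th > -\<infinity>))
     \<comment> \<open>(ii),(iii) for lower semicontinuous f\<close>
     \<and> (\<forall>f. lsc_on {0..T} f \<longrightarrow>
          (\<forall>t\<in>{0<..T}. \<forall>r\<in>{0<..<t}. K_makes_sense \<alpha> r f t \<and> K_val \<alpha> r f t < \<infinity>)
        \<and> (\<forall>th\<in>{0<..T}. (\<forall>s\<in>{0<..T}. f th - g th \<le> f s - g s) \<longrightarrow>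
              K_makes_sense \<alpha> 0 f th \<and> K_val \<alpha> 0 f th < \<infinity>))
     \<comment> \<open>(iv)\<close>
     \<and> (\<forall>ts rs als th rh. (\<forall>j. ts j \<in> {0<..T} \<and> rs j \<in> {0<..<ts j} \<and> als j \<in> {0<..<1})
          \<and> ts \<longlonglongrightarrow> th \<and> rs \<longlonglongrightarrow> rh \<and> als \<longlonglongrightarrow> \<alpha>
          \<and> th \<in> {0<..T} \<and> rh \<in> {0..<th} \<longrightarrow>
          (\<lambda>j. J_val (als j) (rs j) g (ts j)) \<longlonglongrightarrow> J_val \<alpha> rh g th)"
proof (intro conjI allI impI ballI)
  have \<alpha>: "0 < \<alpha>" "\<alpha> < 1" and g: "C1_on {0<..T} g" using assms by auto
  show "J_exists \<alpha> r g t" if "t \<in> {0<..T}" "r \<in> {0<..<t}" for t r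
    using J_exists_C1[OF \<alpha> g] that by auto
  show "K_makes_sense \<alpha> r f t" "-\<infinity> < K_val \<alpha> r f t"
    if "usc_on {0..T} f" "t \<in> {0<..T}" "r \<in> {0<..<t}" for f t r
    using K_makes_sense_usc[OF _ \<alpha>] K_val_usc_gt_MInfty[OF _ \<alpha>] that by auto
  show "K_makes_sense \<alpha> 0 f th" "-\<infinity> < K_val \<alpha> 0 f th"
    if "usc_on {0..T} f" "th \<in> {0<..T}" "\<forall>s\<in>{0<..T}. f s - g s \<le> f th - g th" for f th
    using K_makes_sense_usc_max_point[OF _ g \<alpha>] K_val_usc_max_point_gt_MInfty[OF _ g \<alpha>] that
    by auto
  show "K_makes_sense \<alpha> r f t" "K_val \<alpha> r f t < \<infinity>"
    if "lsc_on {0..T} f" "t \<in> {0<..T}" "r \<in> {0<..<t}" for f t r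
    using K_makes_sense_lsc[OF _ \<alpha>] K_val_lsc_lt_PInfty[OF _ \<alpha>] that by auto
  show "K_makes_sense \<alpha> 0 f th" "K_val \<alpha> 0 f th < \<infinity>"
    if "lsc_on {0..T} f" "th \<in> {0<..T}" "\<forall>s\<in>{0<..T}. f th - g th \<le> f s - g s" for f th
    using K_makes_sense_lsc_min_point[OF _ g \<alpha>] K_val_lsc_min_point_lt_PInfty[OF _ g \<alpha>] that
    by auto
  show "(\<lambda>j. J_val (als j) (rs j) g (ts j)) \<longlonglongrightarrow> J_val \<alpha> rh g th"
    if "(\<forall>j. ts j \<in> {0<..T} \<and> rs j \<in> {0<..<ts j} \<and> als j \<in> {0<..<1})
          \<and> ts \<longlonglongrightarrow> th \<and> rs \<longlonglongrightarrow> rh \<and> als \<longlonglongrightarrow> \<alpha> \<and> th \<in> {0<..T} \<and> rh \<in> {0..<th}"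
    for ts rs als th rh
    using J_val_tendsto[OF \<open>T > 0\<close> \<alpha> g] that by blast
qed

end
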